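(* Let $N\ge1$ and let $\Omega_P,\Omega_S\subset[0,\pi]$ be disjoint nonempty closed sets, each a finite union of closed intervals of positive length. Let $D(\omega)=1$ on $\Omega_P$ and $D(\omega)=0$ on $\Omega_S$. For $K>0$ let $W_K(\omega)=1$ on $\Omega_P$ and $W_K(\omega)=K$ on $\Omega_S$, and define $$\Delta_{P,res}(K)=\min_{c_0,\dots,c_N\in\mathbb{R}}\ \max_{\omega\in\Omega_P\cup\Omega_S}\Bigl|W_K(\omega)\Bigl(\sum_{n=0}^N c_n\cos(n\omega)-D(\omega)\Bigr)\Bigr|,$$ the minimax weighted error of the optimal even-symmetric (zero-phase) sequence of order $2N$ approximating $D$ with weight $W_K$. Then $\Delta_{P,res}$ is a strictly increasing function of $K$ on $(0,\infty)$: if $0<K_1<K_2$ then $\Delta_{P,res}(K_1)<\Delta_{P,res}(K_2)$. *)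

theory Defs
  imports "HOL-Analysis.Analysis"
begin

definition finite_union_of_intervals :: "real set \<Rightarrow> bool" where
  "finite_union_of_intervals A \<longleftrightarrow>
     (\<exists>I :: (real \<times> real) set. finite I \<and> (\<forall>(a,b)\<in>I. a < b) \<and>
        A = (\<Union>(a,b)\<in>I. {a..b}))"

definition desired :: "real set \<Rightarrow> real \<Rightarrow> real" where
  "desired OmegaP w = (if w \<in> OmegaP then 1 else 0)"

definition weight :: "real set \<Rightarrow> real \<Rightarrow> real \<Rightarrow> real" where
  "weight OmegaP K w = (if w \<in> OmegaP then 1 else K)"

definition cospoly :: "nat \<Rightarrow> (nat \<Rightarrow> real) \<Rightarrow> real \<Rightarrow> real" where
  "cospoly N c w = (\<Sum>n=0..N. c n * cos (real n * w))"

definition max_weighted_error ::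
  "nat \<Rightarrow> real set \<Rightarrow> real set \<Rightarrow> real \<Rightarrow> (nat \<Rightarrow> real) \<Rightarrow> real" where
  "max_weighted_error N OmegaP OmegaS K c =
     (SUP w\<in>OmegaP \<union> OmegaS. \<bar>weight OmegaP K w * (cospoly N c w - desired OmegaP w)\<bar>)"

text \<open>Minimax error Delta_{P,res}(K); only c 0..c N matter.\<close>
definition Delta_Pres :: "nat \<Rightarrow> real set \<Rightarrow> real set \<Rightarrow> real \<Rightarrow> real" where
  "Delta_Pres N OmegaP OmegaS K =
     (INF c\<in>(UNIV :: (nat \<Rightarrow> real) set). max_weighted_error N OmegaP OmegaS K c)"

end

theory Submission
  imports Defs "HOL-Computational_Algebra.Polynomial"
begin

text \<open>
  Blending a coefficient vector \<open>c\<close> with the constant response 1, i.e. passing to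
  \<open>(1 - t) c + t \<delta>\<^sub>0\<close>, scales the passband error by \<open>1 - t\<close> and changes the stopband
  error by at most \<open>t K\<close>. Starting from near-optimal vectors for the weight \<open>K\<^sub>2\<close> and
  measuring with \<open>K\<^sub>1 < K\<^sub>2\<close>, the stopband error is scaled by \<open>K\<^sub>1 / K\<^sub>2 < 1\<close>, so for
  small \<open>t > 0\<close> both errors fall strictly below \<open>\<Delta>(K\<^sub>2)\<close>, provided \<open>\<Delta>(K\<^sub>2) > 0\<close>.
  Positivity holds because a cosine polynomial of order \<open>N\<close> is an algebraic polynomial of
  degree \<open>N\<close> in \<open>cos \<omega>\<close>; if it were uniformly small on the (infinite) stopband, Lagrange
  interpolation at \<open>N + 1\<close> stopband nodes would make it small on the passband as well.
\<close>

fun chebyshev_poly :: "nat \<Rightarrow> real poly" where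
  "chebyshev_poly 0 = 1"
| "chebyshev_poly (Suc 0) = [:0, 1:]"
| "chebyshev_poly (Suc (Suc n)) = [:0, 2:] * chebyshev_poly (Suc n) - chebyshev_poly n"

lemma cos_mult_eq_poly_chebyshev_poly: "cos (real n * w) = poly (chebyshev_poly n) (cos w)"
proof (induction n rule: chebyshev_poly.induct)
  case (3 n)
  have "cos (real (Suc (Suc n)) * w) = cos (real (Suc n) * w + w)"
    and "cos (real n * w) = cos (real (Suc n) * w - w)"
    by (simp_all add: algebra_simps)
  then have "cos (real (Suc (Suc n)) * w) = 2 * cos w * cos (real (Suc n) * w) - cos (real n * w)"
    by (simp add: cos_add cos_diff)
  with 3 show ?case by simp
qed auto

lemma degree_chebyshev_poly: "degree (chebyshev_poly n) \<le> n"
proof (induction n rule: chebyshev_poly.induct)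
  case (3 n)
  have "degree ([:0, 2:] * chebyshev_poly (Suc n)) \<le> Suc (Suc n)"
    using degree_mult_le[of "[:0, 2::real:]" "chebyshev_poly (Suc n)"] 3 by simp
  with 3 show ?case by (simp add: degree_diff_le)
qed auto

lemma cospoly_eq_poly_cos: "\<exists>Q. degree Q \<le> N \<and> (\<forall>w. cospoly N c w = poly Q (cos w))"
proof (intro exI conjI allI)
  show "degree (\<Sum>n=0..N. smult (c n) (chebyshev_poly n)) \<le> N"
    by (rule degree_sum_le)
       (auto intro: order.trans[OF degree_smult_le] order.trans[OF degree_chebyshev_poly])
  show "cospoly N c w = poly (\<Sum>n=0..N. smult (c n) (chebyshev_poly n)) (cos w)" for w
    by (simp add: cospoly_def poly_sum cos_mult_eq_poly_chebyshev_poly)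
qed

definition lagrange_basis :: "'a::field set \<Rightarrow> 'a \<Rightarrow> 'a poly" where
  "lagrange_basis U u = (\<Prod>v\<in>U-{u}. smult (1 / (u - v)) [:-v, 1:])"

lemma poly_lagrange_basis: "poly (lagrange_basis U u) x = (\<Prod>v\<in>U-{u}. (x - v) / (u - v))"
  by (simp add: lagrange_basis_def poly_prod diff_divide_distrib)

lemma degree_lagrange_basis:
  assumes "finite U"
  shows "degree (lagrange_basis U u) \<le> card (U - {u})"
proof -
  have "degree (lagrange_basis U u) \<le> (\<Sum>v\<in>U-{u}. degree (smult (1 / (u - v)) [:-v, 1:]))"
    unfolding lagrange_basis_def using degree_prod_sum_le[of "U - {u}"] assms unfolding o_def
    by blast
  also have "\<dots> \<le> (\<Sum>v\<in>U-{u}. 1)"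
    by (intro sum_mono order.trans[OF degree_smult_le]) simp
  finally show ?thesis by simp
qed

lemma lagrange_interpolation:
  fixes Q :: "'a::field poly"
  assumes "finite U" and "degree Q < card U"
  shows "Q = (\<Sum>u\<in>U. smult (poly Q u) (lagrange_basis U u))"
proof (rule poly_eqI_degree[of U])
  fix y assume y: "y \<in> U"
  have "poly Q u * poly (lagrange_basis U u) y = (if u = y then poly Q y else 0)" if "u \<in> U" for u
    using that y assms(1) by (auto simp: poly_lagrange_basis intro!: prod_zero bexI[of _ y])
  then show "poly Q y = poly (\<Sum>u\<in>U. smult (poly Q u) (lagrange_basis U u)) y"
    using y assms(1) by (simp add: poly_sum cong: sum.cong)
next
  show "degree Q < card U" by fact
  have "U \<noteq> {}" using assms(2) by auto
  have "degree (smult (poly Q u) (lagrange_basis U u)) < card U" if "u \<in> U" for u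
    using degree_lagrange_basis[OF assms(1), of u] that assms(1) \<open>U \<noteq> {}\<close>
    by (metis card_Diff1_less le_less_trans degree_smult_le)
  then show "degree (\<Sum>u\<in>U. smult (poly Q u) (lagrange_basis U u)) < card U"
    using \<open>U \<noteq> {}\<close> assms(1) by (intro degree_sum_less) auto
qed

lemma abs_poly_le_lagrange_bound:
  fixes Q :: "real poly"
  assumes "finite U" and "degree Q < card U" and "\<And>u. u \<in> U \<Longrightarrow> \<bar>poly Q u\<bar> \<le> M"
  shows "\<bar>poly Q x\<bar> \<le> M * (\<Sum>u\<in>U. \<bar>poly (lagrange_basis U u) x\<bar>)"
proof -
  have "\<bar>poly Q x\<bar> = \<bar>\<Sum>u\<in>U. poly Q u * poly (lagrange_basis U u) x\<bar>"
    by (subst lagrange_interpolation[OF assms(1,2)]) (simp add: poly_sum)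
  also have "\<dots> \<le> (\<Sum>u\<in>U. \<bar>poly Q u\<bar> * \<bar>poly (lagrange_basis U u) x\<bar>)"
    by (rule order.trans[OF sum_abs]) (simp add: abs_mult)
  also have "\<dots> \<le> (\<Sum>u\<in>U. M * \<bar>poly (lagrange_basis U u) x\<bar>)"
    by (intro sum_mono mult_right_mono assms(3)) auto
  finally show ?thesis by (simp add: sum_distrib_left)
qed

definition weighted_error :: "nat \<Rightarrow> real set \<Rightarrow> real \<Rightarrow> (nat \<Rightarrow> real) \<Rightarrow> real \<Rightarrow> real" where
  "weighted_error N P K c w = \<bar>weight P K w * (cospoly N c w - desired P w)\<bar>"

lemma weighted_error_passband: "w \<in> P \<Longrightarrow> weighted_error N P K c w = \<bar>cospoly N c w - 1\<bar>"
  by (simp add: weighted_error_def weight_def desired_def)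

lemma weighted_error_stopband: "w \<notin> P \<Longrightarrow> weighted_error N P K c w = \<bar>K\<bar> * \<bar>cospoly N c w\<bar>"
  by (simp add: weighted_error_def weight_def desired_def abs_mult)

lemma abs_cospoly_le: "\<bar>cospoly N c w\<bar> \<le> (\<Sum>n=0..N. \<bar>c n\<bar>)"
  unfolding cospoly_def
  by (rule order.trans[OF sum_abs], rule sum_mono) (simp add: abs_mult mult_left_le)

lemma bdd_above_weighted_error: "bdd_above (weighted_error N P K c ` X)"
proof (rule bdd_aboveI2)
  fix w
  have "\<bar>weight P K w\<bar> \<le> max 1 \<bar>K\<bar>" by (simp add: weight_def)
  moreover have "\<bar>cospoly N c w - desired P w\<bar> \<le> (\<Sum>n=0..N. \<bar>c n\<bar>) + 1"
    using abs_cospoly_le[of N c w] by (auto simp: desired_def abs_le_iff)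
  ultimately show "weighted_error N P K c w \<le> max 1 \<bar>K\<bar> * ((\<Sum>n=0..N. \<bar>c n\<bar>) + 1)"
    unfolding weighted_error_def abs_mult by (rule mult_mono) simp_all
qed

lemma max_weighted_error_eq_SUP:
  "max_weighted_error N P S K c = (SUP w\<in>P \<union> S. weighted_error N P K c w)"
  by (simp add: max_weighted_error_def weighted_error_def)

lemma weighted_error_le_max_weighted_error:
  "w \<in> P \<union> S \<Longrightarrow> weighted_error N P K c w \<le> max_weighted_error N P S K c"
  unfolding max_weighted_error_eq_SUP by (rule cSUP_upper[OF _ bdd_above_weighted_error])

lemma max_weighted_error_le:
  "P \<union> S \<noteq> {} \<Longrightarrow> (\<And>w. w \<in> P \<union> S \<Longrightarrow> weighted_error N P K c w \<le> M) \<Longrightarrow>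
    max_weighted_error N P S K c \<le> M"
  unfolding max_weighted_error_eq_SUP by (rule cSUP_least)

lemma max_weighted_error_nonneg:
  assumes "P \<union> S \<noteq> {}"
  shows "0 \<le> max_weighted_error N P S K c"
proof -
  obtain w where "w \<in> P \<union> S" using assms by blast
  then have "weighted_error N P K c w \<le> max_weighted_error N P S K c"
    by (rule weighted_error_le_max_weighted_error)
  then show ?thesis by (simp add: weighted_error_def)
qed

lemma bdd_below_max_weighted_error:
  "P \<union> S \<noteq> {} \<Longrightarrow> bdd_below (range (max_weighted_error N P S K))"
  by (auto intro!: bdd_belowI2 max_weighted_error_nonneg)

lemma Delta_Pres_le_max_weighted_error:
  "P \<union> S \<noteq> {} \<Longrightarrow> Delta_Pres N P S K \<le> max_weighted_error N P S K c"
  unfolding Delta_Pres_def by (rule cINF_lower[OF bdd_below_max_weighted_error]) auto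

lemma le_Delta_Pres: "(\<And>c. M \<le> max_weighted_error N P S K c) \<Longrightarrow> M \<le> Delta_Pres N P S K"
  unfolding Delta_Pres_def by (rule cINF_greatest) auto

lemma max_weighted_error_ge_lagrange_bound:
  assumes "x0 \<in> P" and "P \<inter> S = {}" and "0 < K"
    and "finite U" and "card U = N + 1" and "U \<subseteq> cos ` S"
  shows "K / (K + (\<Sum>u\<in>U. \<bar>poly (lagrange_basis U u) (cos x0)\<bar>)) \<le> max_weighted_error N P S K c"
proof -
  define C where "C = (\<Sum>u\<in>U. \<bar>poly (lagrange_basis U u) (cos x0)\<bar>)"
  define e where "e = max_weighted_error N P S K c"
  have "C \<ge> 0" unfolding C_def by (intro sum_nonneg) auto
  have err_le: "weighted_error N P K c w \<le> e" if "w \<in> P \<union> S" for w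
    unfolding e_def using that by (rule weighted_error_le_max_weighted_error)
  obtain Q where Q: "degree Q \<le> N" "\<And>w. cospoly N c w = poly Q (cos w)"
    using cospoly_eq_poly_cos by blast
  have "\<bar>poly Q u\<bar> \<le> e / K" if "u \<in> U" for u
  proof -
    obtain y where y: "y \<in> S" "u = cos y" using \<open>u \<in> U\<close> assms(6) by blast
    moreover have "y \<notin> P" using y(1) assms(2) by blast
    ultimately have "K * \<bar>cospoly N c y\<bar> \<le> e"
      using err_le[of y] weighted_error_stopband[of y P] \<open>0 < K\<close> by auto
    with y Q(2) \<open>0 < K\<close> show ?thesis by (simp add: field_simps)
  qed
  then have stop: "\<bar>cospoly N c x0\<bar> \<le> e / K * C"
    unfolding Q(2) C_def using assms(4,5) Q(1) by (intro abs_poly_le_lagrange_bound) auto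
  have pass: "\<bar>cospoly N c x0 - 1\<bar> \<le> e"
    using err_le[of x0] weighted_error_passband[OF assms(1)] assms(1) by auto
  have "1 \<le> \<bar>cospoly N c x0\<bar> + \<bar>cospoly N c x0 - 1\<bar>"
    using abs_ge_self[of "cospoly N c x0"] abs_ge_minus_self[of "cospoly N c x0 - 1"] by linarith
  then have "K * 1 \<le> K * (\<bar>cospoly N c x0\<bar> + \<bar>cospoly N c x0 - 1\<bar>)"
    using \<open>0 < K\<close> by (intro mult_left_mono) auto
  then have "K \<le> K * \<bar>cospoly N c x0\<bar> + K * \<bar>cospoly N c x0 - 1\<bar>"
    by (simp only: mult_1_right distrib_left)
  also have "\<dots> \<le> K * (e / K * C) + K * e"
    using stop pass \<open>0 < K\<close> by (intro add_mono mult_left_mono) auto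
  also have "\<dots> = e * (K + C)"
    using \<open>0 < K\<close> by (simp add: field_simps)
  finally show ?thesis
    unfolding C_def[symmetric] e_def[symmetric] using \<open>0 < K\<close> \<open>C \<ge> 0\<close>
    by (simp add: divide_le_eq)
qed

lemma Delta_Pres_pos:
  assumes "x0 \<in> P" and "S \<subseteq> {0..pi}" and "infinite S" and "P \<inter> S = {}" and "0 < K"
  shows "0 < Delta_Pres N P S K"
proof -
  have "inj_on cos S"
    using assms(2) by (intro inj_onI) (meson atLeastAtMost_iff cos_inj_pi subsetD)
  then have "infinite (cos ` S)" using assms(3) by (simp add: finite_image_iff)
  then obtain U where U: "finite U" "card U = N + 1" "U \<subseteq> cos ` S"
    using infinite_arbitrarily_large by blast
  define C where "C = (\<Sum>u\<in>U. \<bar>poly (lagrange_basis U u) (cos x0)\<bar>)"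
  have "0 \<le> C" unfolding C_def by (intro sum_nonneg) auto
  with \<open>0 < K\<close> have "0 < K / (K + C)" by simp
  also have "K / (K + C) \<le> Delta_Pres N P S K"
    unfolding C_def using assms U by (intro le_Delta_Pres max_weighted_error_ge_lagrange_bound)
  finally show ?thesis .
qed

lemma cospoly_blend_constant:
  "cospoly N (\<lambda>n. (1 - t) * c n + (if n = 0 then t else 0)) w = (1 - t) * cospoly N c w + t"
proof -
  have "(\<Sum>n=0..N. (if n = 0 then t else 0) * cos (real n * w)) = (\<Sum>n=0..N. if n = 0 then t else 0)"
    by (rule sum.cong) auto
  then show ?thesis
    by (simp add: cospoly_def distrib_right sum.distrib sum_distrib_left mult.assoc)
qed

lemma max_weighted_error_blend_constant:
  assumes "P \<inter> S = {}" and "P \<union> S \<noteq> {}" and "0 \<le> t" and "t \<le> 1" and "0 \<le> K1" and "0 < K2"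
  shows "max_weighted_error N P S K1 (\<lambda>n. (1 - t) * c n + (if n = 0 then t else 0))
    \<le> max ((1 - t) * max_weighted_error N P S K2 c)
          ((1 - t) * (K1 / K2) * max_weighted_error N P S K2 c + t * K1)"
    (is "max_weighted_error N P S K1 ?c' \<le> max ((1 - t) * ?e) _")
proof (rule max_weighted_error_le[OF assms(2)])
  fix w assume w: "w \<in> P \<union> S"
  have err_le: "weighted_error N P K2 c w \<le> ?e"
    using w by (rule weighted_error_le_max_weighted_error)
  show "weighted_error N P K1 ?c' w \<le> max ((1 - t) * ?e) ((1 - t) * (K1 / K2) * ?e + t * K1)"
  proof (cases "w \<in> P")
    case True
    have "cospoly N ?c' w - 1 = (1 - t) * (cospoly N c w - 1)"
      by (simp only: cospoly_blend_constant) (simp add: algebra_simps)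
    then have "weighted_error N P K1 ?c' w = (1 - t) * weighted_error N P K2 c w"
      using assms(4) by (simp only: weighted_error_passband[OF True] abs_mult)
    also have "\<dots> \<le> (1 - t) * ?e" using err_le assms(4) by (intro mult_left_mono) auto
    finally show ?thesis by simp
  next
    case False
    have "weighted_error N P K1 ?c' w = K1 * \<bar>(1 - t) * cospoly N c w + t\<bar>"
      using False assms(5) by (simp add: weighted_error_stopband cospoly_blend_constant)
    also have "\<dots> \<le> K1 * ((1 - t) * \<bar>cospoly N c w\<bar> + t)"
      using assms(3-5)
      by (intro mult_left_mono) (auto simp: abs_mult intro: abs_triangle_ineq[THEN order.trans])
    also have "\<dots> = (1 - t) * (K1 / K2) * weighted_error N P K2 c w + t * K1"
      using False assms(6) by (simp add: weighted_error_stopband field_simps)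
    also have "\<dots> \<le> (1 - t) * (K1 / K2) * ?e + t * K1"
      using err_le assms(3-6) by (intro add_right_mono mult_left_mono) auto
    finally show ?thesis by simp
  qed
qed

lemma Delta_Pres_blend_constant_le:
  assumes "P \<inter> S = {}" and "P \<union> S \<noteq> {}" and "0 \<le> t" and "t \<le> 1" and "0 \<le> K1" and "0 < K2"
  shows "Delta_Pres N P S K1
    \<le> max ((1 - t) * Delta_Pres N P S K2) ((1 - t) * (K1 / K2) * Delta_Pres N P S K2 + t * K1)"
proof -
  define g where "g e = max ((1 - t) * e) ((1 - t) * (K1 / K2) * e + t * K1)" for e :: real
  have "mono g"
    using assms(4-6) unfolding g_def by (intro monoI max.mono add_right_mono mult_left_mono) auto
  moreover have "continuous (at_right (Delta_Pres N P S K2)) g"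
    unfolding g_def by (intro continuous_intros)
  ultimately have "g (Delta_Pres N P S K2) = (INF c. g (max_weighted_error N P S K2 c))"
    unfolding Delta_Pres_def image_image[symmetric]
    using bdd_below_max_weighted_error[OF assms(2)] by (intro continuous_at_Inf_mono) auto
  moreover have "Delta_Pres N P S K1 \<le> (INF c. g (max_weighted_error N P S K2 c))"
    unfolding g_def using assms
    by (intro cINF_greatest order.trans[OF Delta_Pres_le_max_weighted_error
          max_weighted_error_blend_constant]) auto
  ultimately show ?thesis by (simp add: g_def)
qed

lemma Delta_Pres_strict_mono:
  assumes "x0 \<in> P" and "S \<subseteq> {0..pi}" and "infinite S" and "P \<inter> S = {}"
    and "0 < K1" and "K1 < K2"
  shows "Delta_Pres N P S K1 < Delta_Pres N P S K2"
proof -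
  define D where "D = Delta_Pres N P S K2"
  define r where "r = K1 / K2"
  have "0 < D" unfolding D_def using assms by (intro Delta_Pres_pos) auto
  have "r < 1" using assms by (simp add: r_def)
  have "((\<lambda>t. (1 - t) * r * D + t * K1) \<longlongrightarrow> (1 - 0) * r * D + 0 * K1) (at_right 0)"
    by (intro tendsto_intros tendsto_ident_at)
  moreover have "r * D < D" using \<open>r < 1\<close> \<open>0 < D\<close> by simp
  ultimately have "\<forall>\<^sub>F t in at_right 0. (1 - t) * r * D + t * K1 < D"
    by (auto dest: order_tendstoD)
  moreover have "\<forall>\<^sub>F t in at_right (0::real). t < 1"
    by (rule order_tendstoD(2)[OF tendsto_ident_at]) simp
  ultimately obtain t where t: "0 < t" "t < 1" "(1 - t) * r * D + t * K1 < D"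
    using eventually_at_right_less eventually_happens'[OF trivial_limit_at_right_real]
    by (metis (mono_tags, lifting) eventually_conj)
  have "Delta_Pres N P S K1 \<le> max ((1 - t) * D) ((1 - t) * r * D + t * K1)"
    unfolding D_def r_def using assms t by (intro Delta_Pres_blend_constant_le) auto
  also have "\<dots> < D" using t \<open>0 < D\<close> by simp
  finally show ?thesis by (simp add: D_def)
qed

lemma finite_union_of_intervals_infinite:
  assumes "finite_union_of_intervals A" and "A \<noteq> {}"
  shows "infinite A"
proof -
  obtain I where I: "\<forall>(a, b)\<in>I. a < b" "A = (\<Union>(a, b)\<in>I. {a..b})"
    using assms(1) unfolding finite_union_of_intervals_def by blast
  obtain a b where "(a, b) \<in> I" using assms(2) I(2) by auto
  then have "a < b" "{a..b} \<subseteq> A" using I by auto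
  then show ?thesis using infinite_Icc finite_subset by blast
qed

theorem mainTheorem2:
  fixes N :: nat and OmegaP OmegaS :: "real set" and K1 K2 :: real
  assumes "N \<ge> 1"
    and "OmegaP \<subseteq> {0..pi}" and "OmegaS \<subseteq> {0..pi}"
    and "OmegaP \<inter> OmegaS = {}"
    and "OmegaP \<noteq> {}" and "OmegaS \<noteq> {}"
    and "closed OmegaP" and "closed OmegaS"
    and "finite_union_of_intervals OmegaP" and "finite_union_of_intervals OmegaS"
    and "0 < K1" and "K1 < K2"
  shows "Delta_Pres N OmegaP OmegaS K1 < Delta_Pres N OmegaP OmegaS K2"
proof -
  obtain x0 where "x0 \<in> OmegaP" using \<open>OmegaP \<noteq> {}\<close> by blast
  moreover have "infinite OmegaS"
    using \<open>finite_union_of_intervals OmegaS\<close> \<open>OmegaS \<noteq> {}\<close>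
    by (rule finite_union_of_intervals_infinite)
  ultimately show ?thesis using assms by (intro Delta_Pres_strict_mono) auto
qed

end
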